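(* Let $\omega_a,\omega_c,\kappa,\lambda>0$, $N>0$ and $K\in\mathbb{R}$. Consider, for $(Q,P,X,Y)$ in a neighbourhood of the origin with $X^2+Y^2<\tfrac14$, the system of ordinary differential equations \begin{align*} \dot Q&=\omega_c P-\kappa Q+KN\,P\,(Q^2+P^2),\\ \dot P&=-\omega_c Q-\kappa P-2\sqrt{2}\,\lambda X-KN\,Q\,(Q^2+P^2),\\ \dot X&=-\omega_a Y,\\ \dot Y&=\omega_a X-2\sqrt{2}\,\lambda\, Z\, Q,\qquad Z:=-\sqrt{\tfrac14-X^2-Y^2}. \end{align*} The origin $(Q,P,X,Y)=(0,0,0,0)$ is a fixed point. Let $J$ be the Jacobian matrix of the vector field at the origin. Then all eigenvalues of $J$ have strictly negative real part if and only if $$\frac{4\lambda^2}{\omega_a\omega_c}<1+\Big(\frac{\kappa}{\omega_c}\Big)^2 .$$ In particular, this condition does not depend on $K$.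
   Context: This is the mean-field dynamics of the dissipative quantum Rabi model with Kerr nonlinearity $H/\hbar=\omega_c a^\dagger a+\omega_a S_z+\frac{\lambda}{\sqrt N}(S_++S_-)(a+a^\dagger)+K(a^\dagger)^2a^2$ with cavity loss rate $\kappa$: $Q=\sqrt2\,\mathrm{Re}\,\alpha$, $P=\sqrt2\,\mathrm{Im}\,\alpha$ with $\alpha=\langle a\rangle/\sqrt N$, and $(X,Y,Z)=(\langle S_x\rangle,\langle S_y\rangle,\langle S_z\rangle)/N$ constrained to $X^2+Y^2+Z^2=\tfrac14$; the origin corresponds to the normal phase $Q=P=X=Y=0$, $Z=-\tfrac12$. *)

theory Defs
  imports "HOL-Analysis.Analysis"
begin

definition rabi_Z :: "real \<Rightarrow> real \<Rightarrow> real" where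
  "rabi_Z X Y = - sqrt (1/4 - X^2 - Y^2)"

definition rabi_field ::
  "real \<Rightarrow> real \<Rightarrow> real \<Rightarrow> real \<Rightarrow> real \<Rightarrow> real \<Rightarrow> real^4 \<Rightarrow> real^4" where
  "rabi_field wa wc \<kappa> lam N K v =
     (let Q = v$1; P = v$2; X = v$3; Y = v$4 in
      vector [ wc * P - \<kappa> * Q + K * N * P * (Q^2 + P^2),
               - wc * Q - \<kappa> * P - 2 * sqrt 2 * lam * X - K * N * Q * (Q^2 + P^2),
               - wa * Y,
               wa * X - 2 * sqrt 2 * lam * rabi_Z X Y * Q ])"

definition rabi_jacobian :: "real \<Rightarrow> real \<Rightarrow> real \<Rightarrow> real \<Rightarrow> real \<Rightarrow> real \<Rightarrow> real^4^4" where
  "rabi_jacobian wa wc \<kappa> lam N K =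
     matrix (frechet_derivative (rabi_field wa wc \<kappa> lam N K) (at 0))"

definition cmat :: "real^'n^'n \<Rightarrow> complex^'n^'n" where
  "cmat A = (\<chi> i j. complex_of_real (A$i$j))"

definition is_eigenvalue :: "real^'n^'n \<Rightarrow> complex \<Rightarrow> bool" where
  "is_eigenvalue A z \<longleftrightarrow> (\<exists>v::complex^'n. v \<noteq> 0 \<and> cmat A *v v = z *s v)"

end

theory Submission
  imports Defs
begin

text \<open>The Kerr term is cubic and the spin term only involves Z(X,Y) = -1/2 + O(X^2 + Y^2), so
  the Jacobian at the origin does not depend on K and N. Eliminating the eigenvector shows that
  z is an eigenvalue iff ((z + \<kappa>)^2 + wc^2) (z^2 + wa^2) = 4 lam^2 wa wc. A root with
  Re z \<ge> 0 is impossible when the right-hand side is below the value (\<kappa>^2 + wc^2) wa^2 of the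
  left-hand side at z = 0: on the real axis the left-hand side increases, and off the real axis
  the imaginary part of the equation forces the real part of the left-hand side to be \<le> 0.
  Otherwise the intermediate value theorem gives a real root z \<ge> 0.\<close>

lemma vector_4 [simp]:
  "(vector [a, b, c, d] :: 'a::zero^4)$1 = a"
  "(vector [a, b, c, d] :: 'a::zero^4)$2 = b"
  "(vector [a, b, c, d] :: 'a::zero^4)$3 = c"
  "(vector [a, b, c, d] :: 'a::zero^4)$4 = d"
  unfolding vector_def by simp_all

lemma vector_4_eq_sum_axis:
  "(vector [a, b, c, d] :: real^4) = a *\<^sub>R axis 1 1 + b *\<^sub>R axis 2 1 + c *\<^sub>R axis 3 1 + d *\<^sub>R axis 4 1"
  by (simp add: vec_eq_iff forall_4 axis_def)

definition rabi_linearization :: "real \<Rightarrow> real \<Rightarrow> real \<Rightarrow> real \<Rightarrow> real^4 \<Rightarrow> real^4" where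
  "rabi_linearization wa wc \<kappa> lam v =
     vector [ wc * v$2 - \<kappa> * v$1,
              - wc * v$1 - \<kappa> * v$2 - 2 * sqrt 2 * lam * v$3,
              - wa * v$4,
              wa * v$3 + sqrt 2 * lam * v$1 ]"

lemma rabi_field_has_derivative_at_0:
  "(rabi_field wa wc \<kappa> lam N K has_derivative rabi_linearization wa wc \<kappa> lam) (at 0)"
proof -
  have "sqrt (1/4) = 1/2"
    by (simp add: real_sqrt_divide)
  then show ?thesis
    unfolding rabi_field_def rabi_linearization_def rabi_Z_def Let_def vector_4_eq_sum_axis
    by (auto intro!: derivative_eq_intros bounded_linear.has_derivative[OF bounded_linear_vec_nth]
        simp: algebra_simps)
qed

lemma rabi_jacobian_eq:
  "rabi_jacobian wa wc \<kappa> lam N K = matrix (rabi_linearization wa wc \<kappa> lam)"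
  unfolding rabi_jacobian_def using rabi_field_has_derivative_at_0 frechet_derivative_at by metis

lemma rabi_jacobian_mult_vec:
  fixes wa wc \<kappa> lam N K :: real and v :: "complex^4"
  defines "Jv \<equiv> cmat (rabi_jacobian wa wc \<kappa> lam N K) *v v"
  shows "Jv$1 = wc * v$2 - \<kappa> * v$1"
    and "Jv$2 = - wc * v$1 - \<kappa> * v$2 - 2 * sqrt 2 * lam * v$3"
    and "Jv$3 = - wa * v$4"
    and "Jv$4 = wa * v$3 + sqrt 2 * lam * v$1"
  unfolding Jv_def rabi_jacobian_eq
  by (simp_all add: matrix_vector_mult_def cmat_def matrix_def sum_4 rabi_linearization_def
      axis_def algebra_simps)

lemma rabi_eigenvalue_imp_secular_eq:
  fixes z :: complex
  assumes "wa > 0" "wc > 0" "lam > 0"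
    and "is_eigenvalue (rabi_jacobian wa wc \<kappa> lam N K) z"
  shows "((z + \<kappa>)^2 + wc^2) * (z^2 + wa^2) = 4 * lam^2 * wa * wc"
proof -
  obtain v where "v \<noteq> 0" and eigen: "cmat (rabi_jacobian wa wc \<kappa> lam N K) *v v = z *s v"
    using assms(4) unfolding is_eigenvalue_def by blast
  define c d :: complex where "c = 2 * sqrt 2 * lam" and "d = sqrt 2 * lam"
  have eigen_nth: "(cmat (rabi_jacobian wa wc \<kappa> lam N K) *v v)$i = z * v$i" for i
    using eigen by simp
  from eigen_nth[of 1] eigen_nth[of 2] eigen_nth[of 3] eigen_nth[of 4]
  have E1: "wc * v$2 - \<kappa> * v$1 = z * v$1"
    and E2: "- wc * v$1 - \<kappa> * v$2 - c * v$3 = z * v$2"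
    and E3: "- wa * v$4 = z * v$3"
    and E4: "wa * v$3 + d * v$1 = z * v$4"
    by (simp_all add: rabi_jacobian_mult_vec c_def d_def)
  have cavity: "((z + \<kappa>)^2 + wc^2) * v$1 = - wc * c * v$3"
    using E1 E2 unfolding of_real_minus of_real_power by algebra
  have spin: "(z^2 + wa^2) * v$3 = - wa * d * v$1"
    using E3 E4 unfolding of_real_minus of_real_power by algebra
  have "v$1 \<noteq> 0"
  proof
    assume "v$1 = 0"
    with E1 E2 E3 assms(1-3) have "v$2 = 0" "v$3 = 0" "v$4 = 0"
      by (auto simp: c_def)
    with \<open>v$1 = 0\<close> \<open>v \<noteq> 0\<close> show False
      by (simp add: vec_eq_iff forall_4)
  qed
  moreover have "c * d = 4 * lam^2"
    by (simp add: c_def d_def power2_eq_square algebra_simps flip: of_real_mult)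
  ultimately show ?thesis
    using cavity spin unfolding of_real_minus of_real_power of_real_mult of_real_numeral
    by algebra
qed

lemma rabi_secular_eq_imp_eigenvalue:
  fixes z :: complex
  assumes "wa > 0" "wc > 0" "lam > 0"
    and secular: "((z + \<kappa>)^2 + wc^2) * (z^2 + wa^2) = 4 * lam^2 * wa * wc"
  shows "is_eigenvalue (rabi_jacobian wa wc \<kappa> lam N K) z"
proof -
  define c d :: complex where "c = 2 * sqrt 2 * lam" and "d = sqrt 2 * lam"
  define B where "B = z^2 + wa^2"
  have "B \<noteq> 0"
    using secular assms(1-3) by (auto simp: B_def)
  have "c * d = 4 * lam^2"
    by (simp add: c_def d_def power2_eq_square algebra_simps flip: of_real_mult)
  \<comment> \<open>Normalise Q = 1 and solve the first and the two spin equations for P, X and Y.\<close>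
  define v :: "complex^4" where "v = vector [1, (z + \<kappa>) / wc, - wa * d / B, z * d / B]"
  have "wc * v$2 - \<kappa> * v$1 = z * v$1"
    using assms(2) by (simp add: v_def field_simps)
  moreover have "- wc * v$1 - \<kappa> * v$2 - c * v$3 = z * v$2"
  proof -
    have "((z + \<kappa>)^2 + wc^2) * B = wa * wc * (c * d)"
      using secular unfolding B_def \<open>c * d = 4 * lam^2\<close> by (simp add: algebra_simps)
    then show ?thesis
      using assms(2) \<open>B \<noteq> 0\<close> by (simp add: v_def field_simps power2_eq_square) algebra
  qed
  moreover have "- wa * v$4 = z * v$3"
    by (simp add: v_def)
  moreover have "wa * v$3 + d * v$1 = z * v$4"
    using \<open>B \<noteq> 0\<close> by (simp add: v_def B_def field_simps power2_eq_square)
  ultimately have "cmat (rabi_jacobian wa wc \<kappa> lam N K) *v v = z *s v"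
    by (simp add: vec_eq_iff forall_4 rabi_jacobian_mult_vec c_def d_def)
  moreover have "v \<noteq> 0"
    by (simp add: v_def vec_eq_iff exI[of _ 1])
  ultimately show ?thesis
    unfolding is_eigenvalue_def by blast
qed

lemma quartic_root_Re_neg:
  fixes z :: complex and \<kappa> a c g :: real
  assumes "\<kappa> > 0" "g > 0" "g < (\<kappa>^2 + c^2) * a^2"
    and root: "((z + \<kappa>)^2 + c^2) * (z^2 + a^2) = g"
  shows "Re z < 0"
proof (rule ccontr)
  assume "\<not> Re z < 0"
  define x y where "x = Re z" and "y = Im z"
  have "x \<ge> 0"
    using \<open>\<not> Re z < 0\<close> by (simp add: x_def)
  \<comment> \<open>the real parts of the two factors of the quartic\<close>
  define U V where "U = (x + \<kappa>)^2 - y^2 + c^2" and "V = x^2 - y^2 + a^2"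
  have z_eq: "z = Complex x y"
    by (simp add: x_def y_def)
  have Re_root: "U * V - 4 * (x + \<kappa>) * x * y^2 = g"
    using arg_cong[OF root, of Re] unfolding z_eq
    by (simp add: U_def V_def power2_eq_square algebra_simps)
  have Im_root: "y * (U * x + (x + \<kappa>) * V) = 0"
    using arg_cong[OF root, of Im] unfolding z_eq
    by (simp add: U_def V_def power2_eq_square algebra_simps)
  show False
  proof (cases "y = 0")
    case True
    have "(\<kappa>^2 + c^2) * a^2 \<le> ((x + \<kappa>)^2 + c^2) * (x^2 + a^2)"
      using \<open>x \<ge> 0\<close> assms(1) by (intro mult_mono add_right_mono power_mono) auto
    also have "\<dots> = g"
      using Re_root True by (simp add: U_def V_def)
    finally show False
      using assms(3) by simp
  next
    case False
    then have "U * x + (x + \<kappa>) * V = 0"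
      using Im_root by simp
    then have balance: "U * x = - (x + \<kappa>) * V"
      by algebra
    have "U * V \<le> 0"
    proof (cases "x = 0")
      case True
      then show ?thesis
        using balance assms(1) by simp
    next
      case False
      have "x * (U * V) = (U * x) * V"
        by (simp only: ac_simps)
      also have "\<dots> = - (x + \<kappa>) * V^2"
        by (simp add: balance power2_eq_square)
      also have "\<dots> \<le> 0"
        using \<open>x \<ge> 0\<close> assms(1) by (simp add: mult_nonpos_nonneg)
      finally show ?thesis
        using \<open>x \<ge> 0\<close> False by (simp add: mult_le_0_iff)
    qed
    moreover have "4 * (x + \<kappa>) * x * y^2 \<ge> 0"
      using \<open>x \<ge> 0\<close> assms(1) by simp
    ultimately show False
      using Re_root assms(2) by linarith
  qed
qed

lemma quartic_nonneg_real_root: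
  fixes \<kappa> a c g :: real
  assumes "\<kappa> \<ge> 0" "(\<kappa>^2 + c^2) * a^2 \<le> g"
  shows "\<exists>s\<ge>0. ((s + \<kappa>)^2 + c^2) * (s^2 + a^2) = g"
proof -
  define f where "f s = ((s + \<kappa>)^2 + c^2) * (s^2 + a^2)" for s
  define b where "b = g + 1"
  have "(\<kappa>^2 + c^2) * a^2 \<ge> 0"
    by simp
  then have "b \<ge> 1"
    using assms(2) unfolding b_def by linarith
  have "g \<le> b ^ 1"
    by (simp add: b_def)
  also have "\<dots> \<le> b^2 * b^2"
    using power_increasing[of 1 4 b] \<open>b \<ge> 1\<close> by simp
  also have "\<dots> \<le> f b"
    unfolding f_def using \<open>b \<ge> 1\<close> assms(1)
    by (intro mult_mono add_increasing2 power_mono) auto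
  finally have "g \<le> f b" .
  moreover have "f 0 \<le> g"
    using assms(2) by (simp add: f_def)
  moreover have "continuous_on {0..b} f"
    unfolding f_def by (intro continuous_intros)
  ultimately obtain s where "0 \<le> s" "f s = g"
    using IVT'[of f 0 g b] \<open>b \<ge> 1\<close> by auto
  then show ?thesis
    unfolding f_def by blast
qed

lemma quartic_roots_Re_neg_iff:
  fixes \<kappa> a c g :: real
  assumes "\<kappa> > 0" "g > 0"
  shows "(\<forall>z::complex. ((z + \<kappa>)^2 + c^2) * (z^2 + a^2) = g \<longrightarrow> Re z < 0)
         \<longleftrightarrow> g < (\<kappa>^2 + c^2) * a^2"
proof
  assume stable: "\<forall>z::complex. ((z + \<kappa>)^2 + c^2) * (z^2 + a^2) = g \<longrightarrow> Re z < 0"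
  show "g < (\<kappa>^2 + c^2) * a^2"
  proof (rule ccontr)
    assume "\<not> g < (\<kappa>^2 + c^2) * a^2"
    then obtain s where "s \<ge> 0" and s_root: "((s + \<kappa>)^2 + c^2) * (s^2 + a^2) = g"
      using quartic_nonneg_real_root[of \<kappa> c a g] assms(1) by (auto simp: not_less)
    have "((complex_of_real s + \<kappa>)^2 + c^2) * ((complex_of_real s)^2 + a^2) = g"
      using arg_cong[OF s_root, of complex_of_real] by simp
    then have "Re (complex_of_real s) < 0"
      using stable by blast
    with \<open>s \<ge> 0\<close> show False
      by simp
  qed
next
  assume "g < (\<kappa>^2 + c^2) * a^2"
  then show "\<forall>z::complex. ((z + \<kappa>)^2 + c^2) * (z^2 + a^2) = g \<longrightarrow> Re z < 0"
    using quartic_root_Re_neg assms by blast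
qed

lemma rabi_stability_condition_iff:
  fixes wa wc \<kappa> lam :: real
  assumes "wa > 0" "wc > 0"
  shows "4 * lam^2 / (wa * wc) < 1 + (\<kappa> / wc)^2 \<longleftrightarrow> 4 * lam^2 * wa * wc < (\<kappa>^2 + wc^2) * wa^2"
proof -
  have "4 * lam^2 / (wa * wc) * (wa * wc)^2 = 4 * lam^2 * wa * wc"
    and "(1 + (\<kappa> / wc)^2) * (wa * wc)^2 = (\<kappa>^2 + wc^2) * wa^2"
    using assms by (simp_all add: field_simps power2_eq_square)
  moreover have "(wa * wc)^2 > 0"
    using assms by simp
  ultimately show ?thesis
    by (metis mult_less_cancel_right_pos)
qed

theorem mainTheorem1:
  fixes wa wc \<kappa> lam N K :: real
  assumes "wa > 0" "wc > 0" "\<kappa> > 0" "lam > 0" "N > 0"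
  shows "(\<forall>z. is_eigenvalue (rabi_jacobian wa wc \<kappa> lam N K) z \<longrightarrow> Re z < 0)
         \<longleftrightarrow> 4 * lam^2 / (wa * wc) < 1 + (\<kappa> / wc)^2"
proof -
  have "is_eigenvalue (rabi_jacobian wa wc \<kappa> lam N K) z
        \<longleftrightarrow> ((z + \<kappa>)^2 + wc^2) * (z^2 + wa^2) = 4 * lam^2 * wa * wc" for z :: complex
    using rabi_eigenvalue_imp_secular_eq[OF assms(1,2,4)]
      rabi_secular_eq_imp_eigenvalue[OF assms(1,2,4)]
    by auto
  then have "(\<forall>z. is_eigenvalue (rabi_jacobian wa wc \<kappa> lam N K) z \<longrightarrow> Re z < 0)
             \<longleftrightarrow> 4 * lam^2 * wa * wc < (\<kappa>^2 + wc^2) * wa^2"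
    using quartic_roots_Re_neg_iff[of \<kappa> "4 * lam^2 * wa * wc" wc wa] assms(1-4) by simp
  also have "\<dots> \<longleftrightarrow> 4 * lam^2 / (wa * wc) < 1 + (\<kappa> / wc)^2"
    using rabi_stability_condition_iff assms(1,2) by blast
  finally show ?thesis .
qed

end
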